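(* Let $\mathcal{F}$ be a codimension-$1$ foliation on a complex manifold $X$, let $x\in X$ be a point with dimensional type $t=\tau(\mathcal{F},x)$, and let $E$ be a normal crossings divisor of $X$ through $x$ with each component tangent to $\mathcal{F}$. Then $E$ has at most $t$ components through $x$.
   Context: $\mathcal{F}$ is given locally by a holomorphic $1$-form $\omega$ with coprime coefficients and $\omega\wedge d\omega=0$. The dimensional type $\tau(\mathcal{F},x)$ is the codimension in $T_xX$ of $\{\mathcal{X}(x)\mid\mathcal{X}$ a germ of holomorphic vector field at $x$ with $\omega(\mathcal{X})=0\}$. A component being tangent to $\mathcal{F}$ means it is an invariant hypersurface of $\mathcal{F}$. *)

theory Defs
  imports "HOL-Analysis.Analysis"
begin

text \<open>Local setting: a neighbourhood of the point x in the n-dimensional complex manifold X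
is identified (via a chart) with an open subset of complex^'n.\<close>

definition hol_on :: "(complex^'n) set \<Rightarrow> (complex^'n \<Rightarrow> complex) \<Rightarrow> bool" where
  "hol_on U f \<longleftrightarrow> open U \<and>
     (\<forall>z\<in>U. \<exists>c::complex^'n. (f has_derivative (\<lambda>h. \<Sum>j\<in>UNIV. c $ j * h $ j)) (at z))"

definition hol_germ :: "complex^'n \<Rightarrow> (complex^'n \<Rightarrow> complex) \<Rightarrow> bool" where
  "hol_germ x f \<longleftrightarrow> (\<exists>U. x \<in> U \<and> hol_on U f)"

definition germ_dvd :: "complex^'n \<Rightarrow> (complex^'n \<Rightarrow> complex) \<Rightarrow> (complex^'n \<Rightarrow> complex) \<Rightarrow> bool" where
  "germ_dvd x g f \<longleftrightarrow> (\<exists>c. hol_germ x c \<and> (\<forall>\<^sub>F z in nhds x. f z = c z * g z))"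

definition coprime_germs :: "complex^'n \<Rightarrow> ('n \<Rightarrow> complex^'n \<Rightarrow> complex) \<Rightarrow> bool" where
  "coprime_germs x \<omega> \<longleftrightarrow>
     (\<forall>g. hol_germ x g \<and> (\<forall>i. germ_dvd x g (\<omega> i)) \<longrightarrow> g x \<noteq> 0)"

definition cpd :: "(complex^'n \<Rightarrow> complex) \<Rightarrow> 'n \<Rightarrow> complex^'n \<Rightarrow> complex" where
  "cpd f j z = frechet_derivative f (at z) (axis j 1)"

text \<open>omega wedge d omega = 0 near x (all coefficients of the 3-form vanish)\<close>
definition integrable_form :: "complex^'n \<Rightarrow> ('n \<Rightarrow> complex^'n \<Rightarrow> complex) \<Rightarrow> bool" where
  "integrable_form x \<omega> \<longleftrightarrow> (\<forall>\<^sub>F z in nhds x. \<forall>i j k.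
      \<omega> i z * (cpd (\<omega> k) j z - cpd (\<omega> j) k z)
    + \<omega> j z * (cpd (\<omega> i) k z - cpd (\<omega> k) i z)
    + \<omega> k z * (cpd (\<omega> j) i z - cpd (\<omega> i) j z) = 0)"

text \<open>omega = sum_i omega_i dz_i is a local defining form of a codimension-1 foliation at x\<close>
definition foliation_form :: "complex^'n \<Rightarrow> ('n \<Rightarrow> complex^'n \<Rightarrow> complex) \<Rightarrow> bool" where
  "foliation_form x \<omega> \<longleftrightarrow> (\<forall>i. hol_germ x (\<omega> i)) \<and> coprime_germs x \<omega> \<and> integrable_form x \<omega>"

definition tangent_values :: "complex^'n \<Rightarrow> ('n \<Rightarrow> complex^'n \<Rightarrow> complex) \<Rightarrow> (complex^'n) set" where
  "tangent_values x \<omega> = {V x | V. (\<forall>i. hol_germ x (\<lambda>z. V z $ i)) \<and>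
        (\<forall>\<^sub>F z in nhds x. (\<Sum>i\<in>UNIV. \<omega> i z * V z $ i) = 0)}"

definition dim_type :: "complex^'n \<Rightarrow> ('n \<Rightarrow> complex^'n \<Rightarrow> complex) \<Rightarrow> nat" where
  "dim_type x \<omega> = CARD('n) - vec.dim (tangent_values x \<omega>)"

text \<open>the hypersurface {h = 0} (h a reduced equation) is invariant: h divides omega wedge dh\<close>
definition invariant_hyp :: "complex^'n \<Rightarrow> ('n \<Rightarrow> complex^'n \<Rightarrow> complex) \<Rightarrow> (complex^'n \<Rightarrow> complex) \<Rightarrow> bool" where
  "invariant_hyp x \<omega> h \<longleftrightarrow>
     (\<forall>i j. germ_dvd x h (\<lambda>z. \<omega> i z * cpd h j z - \<omega> j z * cpd h i z))"

definition local_coords :: "complex^'n \<Rightarrow> (complex^'n) set \<Rightarrow> (complex^'n \<Rightarrow> complex^'n) \<Rightarrow> bool" where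
  "local_coords x U \<phi> \<longleftrightarrow> x \<in> U \<and> open U \<and> inj_on \<phi> U \<and> \<phi> x = 0 \<and>
     (\<forall>k. hol_on U (\<lambda>z. \<phi> z $ k)) \<and> open (\<phi> ` U) \<and>
     (\<exists>\<psi>. (\<forall>k. hol_on (\<phi> ` U) (\<lambda>w. \<psi> w $ k)) \<and> (\<forall>z\<in>U. \<psi> (\<phi> z) = z))"

end

theory Submission
  imports Defs "HOL-Complex_Analysis.Cauchy_Integral_Formula"
begin

text \<open>In the chart \<open>\<phi>\<close> the components of \<open>E\<close> through \<open>x\<close> are the hyperplanes
  \<open>\<phi>\<^sub>i = 0\<close>, \<open>i \<in> I\<close>. Let \<open>h\<close> be one of these equations and \<open>V\<close> a holomorphic
  vector field with \<open>\<omega>(V) = 0\<close>. Contracting \<open>\<omega> \<and> dh = h C\<close> with \<open>V\<close> gives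
  \<open>\<omega> \<cdot> dh(V) = h \<cdot> C(V)\<close>, so if \<open>dh(V)\<close> did not vanish at \<open>x\<close>, \<open>h\<close> would divide
  every coefficient of \<open>\<omega>\<close>, contradicting coprimality. Hence all tangent values lie in the
  common kernel of the differentials \<open>d\<phi>\<^sub>i(x)\<close>, \<open>i \<in> I\<close>, which has codimension
  \<open>card I\<close> because \<open>d\<phi>(x)\<close> is invertible.

  The analytic input is that partial derivatives of a holomorphic function of several
  variables are again holomorphic (so that \<open>dh(V)\<close> is a holomorphic germ): Cauchy's
  formula in one variable, differentiation under the integral sign, and Osgood's lemma.\<close>

section \<open>Holomorphic functions of several variables\<close>

definition has_gradient :: "(complex^'n \<Rightarrow> complex) \<Rightarrow> complex^'n \<Rightarrow> complex^'n \<Rightarrow> bool" where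
  "has_gradient f c z \<longleftrightarrow> (f has_derivative (\<lambda>h. \<Sum>j\<in>UNIV. c $ j * h $ j)) (at z)"

lemma hol_on_iff_has_gradient: "hol_on U f \<longleftrightarrow> open U \<and> (\<forall>z\<in>U. \<exists>c. has_gradient f c z)"
  by (simp add: hol_on_def has_gradient_def)

lemma hol_germ_iff_eventually_has_gradient:
  "hol_germ x f \<longleftrightarrow> (\<forall>\<^sub>F z in nhds x. \<exists>c. has_gradient f c z)"
  unfolding hol_germ_def hol_on_iff_has_gradient eventually_nhds by blast

lemma has_gradient_const: "has_gradient (\<lambda>_. a) 0 z"
  by (simp add: has_gradient_def)

lemma has_gradient_add:
  "has_gradient f c z \<Longrightarrow> has_gradient g d z \<Longrightarrow> has_gradient (\<lambda>y. f y + g y) (c + d) z"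
  unfolding has_gradient_def
  by (drule (1) has_derivative_add) (simp add: sum.distrib distrib_right)

lemma has_gradient_mult:
  "has_gradient f c z \<Longrightarrow> has_gradient g d z \<Longrightarrow>
    has_gradient (\<lambda>y. f y * g y) (f z *s d + g z *s c) z"
  unfolding has_gradient_def
  by (drule (1) has_derivative_mult, erule has_derivative_eq_rhs)
     (auto simp: sum_distrib_left sum_distrib_right sum.distrib algebra_simps)

lemma has_gradient_sum:
  "finite S \<Longrightarrow> (\<And>i. i \<in> S \<Longrightarrow> has_gradient (f i) (c i) z) \<Longrightarrow>
    has_gradient (\<lambda>y. \<Sum>i\<in>S. f i y) (\<Sum>i\<in>S. c i) z"
proof (induction S rule: finite_induct)
  case empty
  then show ?case using has_gradient_const[of 0 z] by simp
next
  case (insert a S)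
  then show ?case using has_gradient_add[of "f a" "c a" z "\<lambda>y. \<Sum>i\<in>S. f i y"] by simp
qed

lemma has_gradient_divide:
  "has_gradient f c z \<Longrightarrow> has_gradient g d z \<Longrightarrow> g z \<noteq> 0 \<Longrightarrow>
    has_gradient (\<lambda>y. f y / g y) ((1 / g z) *s c - (f z / (g z * g z)) *s d) z"
  unfolding has_gradient_def
  by (drule (2) has_derivative_divide'[where S=UNIV], erule has_derivative_eq_rhs)
     (auto simp: sum_divide_distrib sum_distrib_left sum_subtractf[symmetric] field_simps
        intro!: sum.cong)

lemma has_gradient_imp_continuous: "has_gradient f c z \<Longrightarrow> continuous (at z) f"
  unfolding has_gradient_def using has_derivative_continuous by blast

lemma continuous_on_if_has_gradient: "\<forall>z\<in>U. \<exists>c. has_gradient f c z \<Longrightarrow> continuous_on U f"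
  using has_gradient_imp_continuous continuous_at_imp_continuous_on by blast

lemma axis_add: "axis k (a + b) = axis k a + (axis k b :: 'a::comm_monoid_add^'n)"
  by (simp add: vec_eq_iff axis_def)

lemma axis_zero [simp]: "axis k 0 = (0::'a::zero^'n)"
  by (simp add: vec_eq_iff axis_def)

lemma norm_axis: "norm (axis k s :: 'a::real_inner^'n) = norm s"
  by (simp add: norm_eq_sqrt_inner inner_axis_axis)

lemma bounded_linear_axis: "bounded_linear (axis k :: complex \<Rightarrow> complex^'n)"
proof (rule bounded_linear_intro[where K=1])
  show "axis k (x + y) = (axis k x + axis k y :: complex^'n)" for x y
    by (rule axis_add)
  show "axis k (r *\<^sub>R x) = (r *\<^sub>R axis k x :: complex^'n)" for r x
    by (simp add: vec_eq_iff axis_def)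
  show "norm (axis k x :: complex^'n) \<le> norm x * 1" for x
    by (simp add: norm_axis)
qed

lemma has_derivative_coordinate_line:
  "((\<lambda>s. z + axis k s :: complex^'n) has_derivative axis k) (at t within S)"
  using bounded_linear.has_derivative[OF bounded_linear_axis has_derivative_ident, of k]
  by (auto intro!: derivative_eq_intros)

lemma continuous_on_coordinate_line: "continuous_on S (\<lambda>s. z + axis k s :: complex^'n)"
  by (intro continuous_on_add continuous_on_const linear_continuous_on bounded_linear_axis)

definition partial_deriv :: "(complex^'n \<Rightarrow> complex) \<Rightarrow> 'n \<Rightarrow> complex^'n \<Rightarrow> complex" where
  "partial_deriv g k z = deriv (\<lambda>s. g (z + axis k s)) 0"

definition separately_holomorphic_on :: "(complex^'n) set \<Rightarrow> (complex^'n \<Rightarrow> complex) \<Rightarrow> bool" where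
  "separately_holomorphic_on U g \<longleftrightarrow>
     (\<forall>z\<in>U. \<forall>k. (\<lambda>s. g (z + axis k s)) field_differentiable (at 0))"

lemma has_gradient_imp_has_field_derivative_line:
  fixes z :: "complex^'n"
  assumes "has_gradient f c z"
  shows "((\<lambda>s. f (z + axis k s)) has_field_derivative c $ k) (at 0)"
proof -
  have "(f has_derivative (\<lambda>h. \<Sum>j\<in>UNIV. c $ j * h $ j)) (at (z + axis k 0))"
    using assms by (simp add: has_gradient_def)
  from has_derivative_compose[OF has_derivative_coordinate_line this]
  have "((\<lambda>s. f (z + axis k s)) has_derivative (\<lambda>s. \<Sum>j\<in>UNIV. c $ j * (axis k s :: complex^'n) $ j)) (at 0)" .
  moreover have "(\<lambda>s. \<Sum>j\<in>UNIV. c $ j * (axis k s :: complex^'n) $ j) = (*) (c $ k)"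
    by (auto simp: axis_def if_distrib cong: if_cong)
  ultimately show ?thesis by (simp add: has_field_derivative_def)
qed

lemma partial_deriv_eq_gradient: "has_gradient f c z \<Longrightarrow> partial_deriv f k z = c $ k"
  unfolding partial_deriv_def using has_gradient_imp_has_field_derivative_line DERIV_imp_deriv
  by blast

lemma cpd_eq_gradient: "has_gradient f c z \<Longrightarrow> cpd f j z = c $ j"
proof -
  assume "has_gradient f c z"
  then have "frechet_derivative f (at z) = (\<lambda>h. \<Sum>i\<in>UNIV. c $ i * h $ i)"
    unfolding has_gradient_def by (metis frechet_derivative_at)
  then show ?thesis unfolding cpd_def by (simp add: axis_def if_distrib cong: if_cong)
qed

lemma separately_holomorphic_if_has_gradient:
  "\<forall>z\<in>U. \<exists>c. has_gradient f c z \<Longrightarrow> separately_holomorphic_on U f"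
  unfolding separately_holomorphic_on_def field_differentiable_def
  using has_gradient_imp_has_field_derivative_line by blast

lemma separately_holomorphic_has_field_derivative:
  assumes "separately_holomorphic_on U g" "q + axis k t \<in> U"
  shows "((\<lambda>s. g (q + axis k s)) has_field_derivative partial_deriv g k (q + axis k t)) (at t)"
proof -
  have "((\<lambda>s. g (q + axis k t + axis k s)) has_field_derivative partial_deriv g k (q + axis k t)) (at 0)"
    using assms unfolding separately_holomorphic_on_def partial_deriv_def
    using DERIV_deriv_iff_field_differentiable by blast
  moreover have "(\<lambda>s. g (q + axis k t + axis k s)) = (\<lambda>s. (\<lambda>s. g (q + axis k s)) (s + t))"
    by (simp add: axis_add add_ac)
  ultimately show ?thesis using DERIV_shift[of "\<lambda>s. g (q + axis k s)" _ 0 t] by simp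
qed

definition circle_kernel :: "real \<Rightarrow> real \<Rightarrow> complex" where
  "circle_kernel r \<theta> = vector_derivative (circlepath 0 r) (at \<theta>) / (circlepath 0 r \<theta>)^2"

lemma circlepath_0: "circlepath 0 r \<theta> = of_real r * exp (\<i> * of_real (2 * pi * \<theta>))"
  by (simp add: circlepath_def part_circlepath_def linepath_def mult_ac)

lemma continuous_on_circle_kernel: "r > 0 \<Longrightarrow> continuous_on S (circle_kernel r)"
  unfolding circle_kernel_def vector_derivative_circlepath unfolding circlepath_0
  by (intro continuous_intros) auto

lemma continuous_on_circlepath_0: "continuous_on S (circlepath 0 r)"
  unfolding circlepath_0 by (intro continuous_intros)

lemma norm_circlepath_0: "r \<ge> 0 \<Longrightarrow> norm (circlepath 0 r \<theta>) = r"
  unfolding circlepath_0 by (simp add: norm_mult)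

lemma partial_deriv_Cauchy_integral:
  assumes cont: "continuous_on U g" and sh: "separately_holomorphic_on U g"
    and sub: "cball w r \<subseteq> U" and r: "r > 0"
  shows "partial_deriv g k w = 1 / (2 * of_real pi * \<i>) *
           integral {0..1} (\<lambda>\<theta>. g (w + axis k (circlepath 0 r \<theta>)) * circle_kernel r \<theta>)"
proof -
  define u where "u = (\<lambda>s. g (w + axis k s))"
  have img: "w + axis k s \<in> U" if "s \<in> cball 0 r" for s :: complex
    using that sub by (auto simp: dist_norm norm_axis)
  have cu: "continuous_on (cball 0 r) u"
    unfolding u_def by (rule continuous_on_compose2[OF cont continuous_on_coordinate_line])
      (use img in auto)
  have hu: "u holomorphic_on ball 0 r"
    unfolding holomorphic_on_def
  proof
    fix s :: complex assume "s \<in> ball 0 r"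
    then have "w + axis k s \<in> U" using img by auto
    then have "(u has_field_derivative partial_deriv g k (w + axis k s)) (at s)"
      unfolding u_def by (rule separately_holomorphic_has_field_derivative[OF sh])
    then show "u field_differentiable at s within ball 0 r"
      using field_differentiable_at_within field_differentiable_def by blast
  qed
  have "(u has_field_derivative 1 / (2 * of_real pi * \<i>) *
          contour_integral (circlepath 0 r) (\<lambda>v. u v / (v - 0)^2)) (at 0)"
    by (rule Cauchy_derivative_integral_circlepath(2)[OF cu hu]) (use r in simp)
  then have "partial_deriv g k w =
      1 / (2 * of_real pi * \<i>) * contour_integral (circlepath 0 r) (\<lambda>v. u v / (v - 0)^2)"
    unfolding partial_deriv_def u_def by (rule DERIV_imp_deriv)
  then show ?thesis
    unfolding contour_integral_integral circle_kernel_def u_def by (simp add: algebra_simps)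
qed

lemma continuous_on_circle_integrand:
  fixes F :: "complex^'n \<Rightarrow> complex" and p :: "'a::topological_space \<Rightarrow> complex^'n"
  assumes F: "continuous_on U F" and p: "continuous_on T p"
    and img: "\<And>t \<theta>. t \<in> T \<Longrightarrow> p t + axis b (circlepath 0 r \<theta>) \<in> U" and r: "r > 0"
  shows "continuous_on (T \<times> S) (\<lambda>(t, \<theta>). F (p t + axis b (circlepath 0 r \<theta>)) * circle_kernel r \<theta>)"
  unfolding case_prod_unfold
proof (intro continuous_on_mult)
  show "continuous_on (T \<times> S) (\<lambda>q. F (p (fst q) + axis b (circlepath 0 r (snd q))))"
  proof (rule continuous_on_compose2[OF F])
    show "continuous_on (T \<times> S) (\<lambda>q. p (fst q) + axis b (circlepath 0 r (snd q)))"
      by (intro continuous_on_add continuous_on_compose2[OF p continuous_on_fst]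
          continuous_on_compose2[OF linear_continuous_on[OF bounded_linear_axis]
            continuous_on_compose2[OF continuous_on_circlepath_0 continuous_on_snd]]) auto
    show "(\<lambda>q. p (fst q) + axis b (circlepath 0 r (snd q))) ` (T \<times> S) \<subseteq> U"
      using img by auto
  qed
  show "continuous_on (T \<times> S) (\<lambda>q. circle_kernel r (snd q))"
    by (rule continuous_on_compose2[OF continuous_on_circle_kernel[OF r] continuous_on_snd]) auto
qed

lemma continuous_on_partial_deriv:
  assumes U: "open U" and cont: "continuous_on U g" and sh: "separately_holomorphic_on U g"
  shows "continuous_on U (partial_deriv g k)"
proof (rule continuous_at_imp_continuous_on, rule ballI)
  fix w assume "w \<in> U"
  then obtain e where e: "e > 0" "cball w e \<subseteq> U" using U open_contains_cball by blast
  define r where "r = e / 2"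
  have r: "r > 0" and sub: "cball w (2*r) \<subseteq> U" using e by (auto simp: r_def)
  define F where "F w' = 1 / (2 * of_real pi * \<i>) *
    integral {0..1} (\<lambda>\<theta>. g (w' + axis k (circlepath 0 r \<theta>)) * circle_kernel r \<theta>)" for w'
  have eq: "partial_deriv g k w' = F w'" if "w' \<in> ball w r" for w'
  proof -
    have "cball w' r \<subseteq> U"
    proof
      fix y assume "y \<in> cball w' r"
      then have "dist w y \<le> 2*r" using that dist_triangle[of w y w'] by auto
      then show "y \<in> U" using sub by auto
    qed
    then show ?thesis unfolding F_def by (rule partial_deriv_Cauchy_integral[OF cont sh _ r])
  qed
  have img: "w' + axis k (circlepath 0 r \<theta>) \<in> U" if "w' \<in> ball w r" for w' \<theta>
  proof -
    have "dist w (w' + axis k (circlepath 0 r \<theta>)) \<le> dist w w' + norm (axis k (circlepath 0 r \<theta>) :: complex^_)"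
      by (metis dist_norm dist_triangle2 add_diff_cancel_left' norm_minus_commute)
    also have "\<dots> < 2 * r" using that r by (auto simp: norm_axis norm_circlepath_0)
    finally show ?thesis using sub by auto
  qed
  have "continuous_on (ball w r \<times> cbox 0 1)
      (\<lambda>(w', \<theta>). g (w' + axis k (circlepath 0 r \<theta>)) * circle_kernel r \<theta>)"
    by (rule continuous_on_circle_integrand[OF cont continuous_on_id img r])
  from integral_continuous_on_param[OF this] have "continuous_on (ball w r) F"
    unfolding F_def by (intro continuous_intros) (simp add: cbox_interval)
  then have "continuous_on (ball w r) (partial_deriv g k)"
    using eq continuous_on_cong by blast
  then show "isCont (partial_deriv g k) w" using continuous_on_interior r by fastforce
qed

subsection \<open>Osgood's lemma\<close>

definition coord_restrict :: "'n set \<Rightarrow> 'a::zero^'n \<Rightarrow> 'a^'n" where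
  "coord_restrict S h = (\<chi> j. if j \<in> S then h $ j else 0)"

lemma coordinate_line_increment_bound:
  fixes g :: "complex^'n \<Rightarrow> complex"
  assumes sh: "separately_holomorphic_on U g"
    and seg: "\<And>t. t \<in> closed_segment 0 s \<Longrightarrow>
                q + axis a t \<in> U \<and> norm (partial_deriv g a (q + axis a t) - c) \<le> \<epsilon>"
  shows "norm (g (q + axis a s) - g q - c * s) \<le> \<epsilon> * norm s"
proof -
  define u where "u t = g (q + axis a t) - c * t" for t
  have "(u has_field_derivative (partial_deriv g a (q + axis a t) - c)) (at t within closed_segment 0 s)"
    if "t \<in> closed_segment 0 s" for t
  proof -
    have "q + axis a t \<in> U" using seg[OF that] by blast
    from separately_holomorphic_has_field_derivative[OF sh this]
    have "(u has_field_derivative (partial_deriv g a (q + axis a t) - c)) (at t)"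
      unfolding u_def by (auto intro!: derivative_eq_intros)
    then show ?thesis by (rule has_field_derivative_at_within)
  qed
  then have "norm (u s - u 0) \<le> \<epsilon> * norm (s - 0)"
    by (rule field_differentiable_bound[OF convex_closed_segment]) (use seg in auto)
  then show ?thesis by (simp add: u_def algebra_simps)
qed

text \<open>Induction on \<open>S\<close> telescopes the increment of \<open>g\<close> from \<open>z\<close> to \<open>z + h\<close> into
  steps along single coordinate lines.\<close>

lemma partial_deriv_increment_bound:
  fixes g :: "complex^'n \<Rightarrow> complex"
  assumes sh: "separately_holomorphic_on U g"
    and near: "\<And>y. dist y z < d \<Longrightarrow>
                 y \<in> U \<and> (\<forall>k. dist (partial_deriv g k y) (partial_deriv g k z) < \<epsilon>)"
    and h: "norm h < d" and S: "finite S"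
  shows "norm (g (z + coord_restrict S h) - g z - (\<Sum>k\<in>S. partial_deriv g k z * h $ k))
           \<le> \<epsilon> * (\<Sum>k\<in>S. norm (h $ k))"
  using S
proof (induction S rule: finite_induct)
  case empty
  have "coord_restrict {} h = 0" by (simp add: coord_restrict_def vec_eq_iff)
  then show ?case by simp
next
  case (insert a S)
  define q where "q = z + coord_restrict S h"
  have insert_eq: "z + coord_restrict (insert a S) h = q + axis a (h $ a)"
    using insert(2) by (auto simp: q_def coord_restrict_def vec_eq_iff axis_def)
  have step: "norm (g (q + axis a (h $ a)) - g q - partial_deriv g a z * h $ a) \<le> \<epsilon> * norm (h $ a)"
  proof (rule coordinate_line_increment_bound[OF sh])
    fix t assume t: "t \<in> closed_segment 0 (h $ a)"
    have "closed_segment 0 (h $ a) \<subseteq> cball 0 (norm (h $ a))"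
      by (rule closed_segment_subset) auto
    then have "norm (coord_restrict S h + axis a t) \<le> norm h"
      using t insert(2)
      by (intro norm_le_componentwise_cart) (auto simp: coord_restrict_def axis_def)
    then have "dist (q + axis a t) z < d" using h by (simp add: q_def dist_norm)
    from near[OF this]
    show "q + axis a t \<in> U \<and> norm (partial_deriv g a (q + axis a t) - partial_deriv g a z) \<le> \<epsilon>"
      by (auto simp: dist_norm less_imp_le)
  qed
  have split: "g (z + coord_restrict (insert a S) h) - g z - (\<Sum>k\<in>insert a S. partial_deriv g k z * h $ k)
      = (g (q + axis a (h $ a)) - g q - partial_deriv g a z * h $ a)
        + (g q - g z - (\<Sum>k\<in>S. partial_deriv g k z * h $ k))"
    using insert(1,2) by (simp add: insert_eq algebra_simps)
  have "norm (g (z + coord_restrict (insert a S) h) - g z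
        - (\<Sum>k\<in>insert a S. partial_deriv g k z * h $ k))
      \<le> norm (g (q + axis a (h $ a)) - g q - partial_deriv g a z * h $ a)
        + norm (g q - g z - (\<Sum>k\<in>S. partial_deriv g k z * h $ k))"
    unfolding split by (rule norm_triangle_ineq)
  also have "\<dots> \<le> \<epsilon> * norm (h $ a) + \<epsilon> * (\<Sum>k\<in>S. norm (h $ k))"
    using add_mono[OF step insert(3)[folded q_def]] .
  also have "\<dots> = \<epsilon> * (\<Sum>k\<in>insert a S. norm (h $ k))"
    using insert(1,2) by (simp add: distrib_left)
  finally show ?case .
qed

lemma osgood_has_gradient:
  fixes g :: "complex^'n \<Rightarrow> complex"
  assumes U: "open U" and sh: "separately_holomorphic_on U g"
    and pc: "\<And>k. continuous_on U (partial_deriv g k)" and z: "z \<in> U"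
  shows "has_gradient g (\<chi> k. partial_deriv g k z) z"
  unfolding has_gradient_def has_derivative_at_alt
proof (intro conjI allI impI)
  show "bounded_linear (\<lambda>h. \<Sum>j\<in>UNIV. (\<chi> k. partial_deriv g k z) $ j * h $ j)"
    by (intro bounded_linear_sum bounded_linear_compose[OF bounded_linear_mult_right]
        bounded_linear_vec_nth)
  fix e :: real assume e: "e > 0"
  define \<epsilon> where "\<epsilon> = e / CARD('n)"
  have \<epsilon>: "\<epsilon> > 0" using e by (simp add: \<epsilon>_def)
  have "\<forall>\<^sub>F y in nhds z. dist (partial_deriv g k y) (partial_deriv g k z) < \<epsilon>" for k
  proof -
    have "isCont (partial_deriv g k) z" using pc[of k] U z continuous_on_eq_continuous_at by blast
    then obtain d where "d > 0" "\<forall>y. dist y z < d \<longrightarrow> dist (partial_deriv g k y) (partial_deriv g k z) < \<epsilon>"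
      using \<epsilon> unfolding continuous_at_eps_delta by blast
    then show ?thesis unfolding eventually_nhds_metric by blast
  qed
  then have "\<forall>\<^sub>F y in nhds z. \<forall>k. dist (partial_deriv g k y) (partial_deriv g k z) < \<epsilon>"
    by (rule eventually_all_finite)
  moreover have "\<forall>\<^sub>F y in nhds z. y \<in> U" using eventually_nhds_in_open[OF U z] .
  ultimately have "\<forall>\<^sub>F y in nhds z. y \<in> U \<and> (\<forall>k. dist (partial_deriv g k y) (partial_deriv g k z) < \<epsilon>)"
    by (rule eventually_conj[rotated])
  then obtain d where d: "d > 0"
    and near: "\<And>y. dist y z < d \<Longrightarrow>
                 y \<in> U \<and> (\<forall>k. dist (partial_deriv g k y) (partial_deriv g k z) < \<epsilon>)"
    unfolding eventually_nhds_metric by blast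
  show "\<exists>d>0. \<forall>y. norm (y - z) < d \<longrightarrow>
    norm (g y - g z - (\<Sum>j\<in>UNIV. (\<chi> k. partial_deriv g k z) $ j * (y - z) $ j)) \<le> e * norm (y - z)"
  proof (intro exI conjI allI impI)
    fix y assume y: "norm (y - z) < d"
    have "coord_restrict UNIV (y - z) = y - z" by (simp add: coord_restrict_def vec_eq_iff)
    then have "norm (g y - g z - (\<Sum>k\<in>UNIV. partial_deriv g k z * (y - z) $ k))
        \<le> \<epsilon> * (\<Sum>k\<in>UNIV. norm ((y - z) $ k))"
      using partial_deriv_increment_bound[OF sh near y, of UNIV] by simp
    also have "\<dots> \<le> \<epsilon> * (\<Sum>k\<in>(UNIV::'n set). norm (y - z))"
      using \<epsilon> Finite_Cartesian_Product.norm_nth_le[of "y - z"] by (intro mult_left_mono sum_mono) auto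
    also have "\<dots> = e * norm (y - z)" by (simp add: \<epsilon>_def)
    finally show "norm (g y - g z - (\<Sum>j\<in>UNIV. (\<chi> k. partial_deriv g k z) $ j * (y - z) $ j))
        \<le> e * norm (y - z)"
      by simp
  qed (rule d)
qed

lemma holomorphic_on_circle_integral_along_line:
  fixes f :: "complex^'n \<Rightarrow> complex"
  assumes U: "open U" and cf: "continuous_on U f" and shf: "separately_holomorphic_on U f"
    and img: "\<And>t \<theta>. t \<in> ball 0 r \<Longrightarrow> w + axis k t + axis b (circlepath 0 r \<theta>) \<in> U"
    and r: "r > 0"
  shows "(\<lambda>t. integral {0..1} (\<lambda>\<theta>. f (w + axis k t + axis b (circlepath 0 r \<theta>)) * circle_kernel r \<theta>))
           holomorphic_on ball 0 r"
proof -
  define G where "G t \<theta> = f (w + axis k t + axis b (circlepath 0 r \<theta>)) * circle_kernel r \<theta>"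
    for t \<theta>
  define G' where
    "G' t \<theta> = partial_deriv f k (w + axis k t + axis b (circlepath 0 r \<theta>)) * circle_kernel r \<theta>"
    for t \<theta>
  have "(\<lambda>t. integral (cbox 0 1) (G t)) holomorphic_on ball 0 r"
  proof (rule leibniz_rule_holomorphic[where fx = G'])
    fix t :: complex and \<theta> :: real assume t: "t \<in> ball 0 r"
    define q where "q = w + axis b (circlepath 0 r \<theta>)"
    have "q + axis k t \<in> U" using img[OF t, of \<theta>] by (simp add: q_def add_ac)
    from separately_holomorphic_has_field_derivative[OF shf this]
    have "((\<lambda>s. f (w + axis k s + axis b (circlepath 0 r \<theta>))) has_field_derivative
        partial_deriv f k (w + axis k t + axis b (circlepath 0 r \<theta>))) (at t)"
      by (simp add: q_def add_ac)
    then show "((\<lambda>t. G t \<theta>) has_field_derivative G' t \<theta>) (at t within ball 0 r)"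
      unfolding G_def G'_def by (rule has_field_derivative_at_within[OF DERIV_cmult_right])
  next
    fix t :: complex assume t: "t \<in> ball 0 r"
    have "continuous_on ({t} \<times> cbox 0 1) (\<lambda>(t, \<theta>). G t \<theta>)"
      unfolding G_def
      by (rule continuous_on_circle_integrand[where p="\<lambda>t. w + axis k t", OF cf
            continuous_on_coordinate_line]) (use img t r in auto)
    then have "continuous_on (cbox 0 1) (\<lambda>\<theta>. (\<lambda>(t, \<theta>). G t \<theta>) (t, \<theta>))"
      by (rule continuous_on_compose2) (auto intro!: continuous_intros)
    then show "G t integrable_on cbox 0 1" by (simp add: integrable_continuous_real)
  next
    show "continuous_on (ball 0 r \<times> cbox 0 1) (\<lambda>(t, \<theta>). G' t \<theta>)"
      unfolding G'_def
      by (rule continuous_on_circle_integrand[where p="\<lambda>t. w + axis k t",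
            OF continuous_on_partial_deriv[OF U cf shf] continuous_on_coordinate_line img r])
  qed simp
  then show ?thesis unfolding G_def by (simp add: cbox_interval)
qed

text \<open>Along a coordinate line in direction \<open>k\<close>, \<open>\<partial>f/\<partial>z\<^sub>b\<close> is a Cauchy integral depending
  holomorphically on the parameter.\<close>

lemma separately_holomorphic_partial_deriv:
  fixes f :: "complex^'n \<Rightarrow> complex"
  assumes U: "open U" and cf: "continuous_on U f" and shf: "separately_holomorphic_on U f"
  shows "separately_holomorphic_on U (partial_deriv f b)"
  unfolding separately_holomorphic_on_def
proof (intro ballI allI)
  fix w k assume "w \<in> U"
  obtain e where e: "e > 0" "cball w e \<subseteq> U" using U \<open>w \<in> U\<close> open_contains_cball by blast
  define r where "r = e / 2"
  have r: "r > 0" and sub: "cball w (2*r) \<subseteq> U" using e by (auto simp: r_def)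
  have img: "w + axis k t + axis b (circlepath 0 r \<theta>) \<in> U" if "t \<in> ball 0 r" for t \<theta>
  proof -
    have "dist w (w + axis k t + axis b (circlepath 0 r \<theta>))
        \<le> norm (axis k t :: complex^'n) + norm (axis b (circlepath 0 r \<theta>) :: complex^'n)"
      by (simp add: dist_norm add.assoc norm_triangle_le_diff)
    also have "\<dots> < 2 * r" using that r by (simp add: norm_axis norm_circlepath_0)
    finally show ?thesis using sub by auto
  qed
  have eq: "partial_deriv f b (w + axis k t) = 1 / (2 * of_real pi * \<i>) *
      integral {0..1} (\<lambda>\<theta>. f (w + axis k t + axis b (circlepath 0 r \<theta>)) * circle_kernel r \<theta>)"
    if "t \<in> ball 0 r" for t
  proof (rule partial_deriv_Cauchy_integral[OF cf shf _ r])
    show "cball (w + axis k t) r \<subseteq> U"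
    proof
      fix y assume "y \<in> cball (w + axis k t) r"
      then have "dist w y \<le> 2 * r"
        using that dist_triangle[of w y "w + axis k t"] by (simp add: dist_norm norm_axis)
      then show "y \<in> U" using sub by auto
    qed
  qed
  have "(\<lambda>t. 1 / (2 * of_real pi * \<i>) * integral {0..1}
      (\<lambda>\<theta>. f (w + axis k t + axis b (circlepath 0 r \<theta>)) * circle_kernel r \<theta>)) holomorphic_on ball 0 r"
    by (intro holomorphic_on_mult holomorphic_on_const
        holomorphic_on_circle_integral_along_line[OF U cf shf img r])
  then have "(\<lambda>t. partial_deriv f b (w + axis k t)) holomorphic_on ball 0 r"
    by (rule holomorphic_transform) (simp add: eq)
  then show "(\<lambda>s. partial_deriv f b (w + axis k s)) field_differentiable (at 0)"
    by (rule holomorphic_on_imp_differentiable_at) (use r in auto)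
qed

lemma hol_on_cpd:
  assumes "hol_on U f"
  shows "hol_on U (cpd f j)"
proof -
  have U: "open U" and hf: "\<forall>z\<in>U. \<exists>c. has_gradient f c z"
    using assms by (auto simp: hol_on_iff_has_gradient)
  have cf: "continuous_on U f" and shf: "separately_holomorphic_on U f"
    using hf by (auto intro: continuous_on_if_has_gradient separately_holomorphic_if_has_gradient)
  have c1: "continuous_on U (partial_deriv f j)"
    by (rule continuous_on_partial_deriv[OF U cf shf])
  have s1: "separately_holomorphic_on U (partial_deriv f j)"
    by (rule separately_holomorphic_partial_deriv[OF U cf shf])
  have eq: "partial_deriv f j y = cpd f j y" if "y \<in> U" for y
    using hf that partial_deriv_eq_gradient cpd_eq_gradient by metis
  show ?thesis unfolding hol_on_iff_has_gradient
  proof (intro conjI ballI U)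
    fix z assume z: "z \<in> U"
    have "has_gradient (partial_deriv f j) (\<chi> k. partial_deriv (partial_deriv f j) k z) z"
      by (rule osgood_has_gradient[OF U s1 continuous_on_partial_deriv[OF U c1 s1] z])
    then show "\<exists>c. has_gradient (cpd f j) c z"
      unfolding has_gradient_def
      using has_derivative_transform_within_open[of "partial_deriv f j" _ z UNIV U "cpd f j"] eq U z
      by blast
  qed
qed

lemma hol_germ_imp_continuous:
  assumes "hol_germ x f"
  shows "continuous (at x) f"
proof -
  have "\<exists>c. has_gradient f c x"
    using assms unfolding hol_germ_iff_eventually_has_gradient by (rule eventually_nhds_x_imp_x)
  then show ?thesis using has_gradient_imp_continuous by blast
qed

lemma hol_germ_eventually_nonzero:
  assumes "hol_germ x g" "g x \<noteq> 0"
  shows "\<forall>\<^sub>F z in nhds x. g z \<noteq> 0"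
proof -
  have "(g \<longlongrightarrow> g x) (at x)" using hol_germ_imp_continuous[OF assms(1)] by (simp add: isCont_def)
  then have "\<forall>\<^sub>F z in at x. g z \<noteq> 0" using assms(2) tendsto_imp_eventually_ne by blast
  then show ?thesis unfolding eventually_at_filter by (rule eventually_mono) (use assms(2) in auto)
qed

lemma hol_germ_mult: "hol_germ x f \<Longrightarrow> hol_germ x g \<Longrightarrow> hol_germ x (\<lambda>z. f z * g z)"
proof -
  assume "hol_germ x f" "hol_germ x g"
  then have "\<forall>\<^sub>F z in nhds x. (\<exists>c. has_gradient f c z) \<and> (\<exists>c. has_gradient g c z)"
    unfolding hol_germ_iff_eventually_has_gradient by (rule eventually_conj)
  then show ?thesis unfolding hol_germ_iff_eventually_has_gradient
    by (rule eventually_mono) (auto intro: has_gradient_mult)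
qed

lemma hol_germ_sum:
  fixes f :: "'i::finite \<Rightarrow> complex^'n \<Rightarrow> complex"
  assumes "\<And>i. hol_germ x (f i)"
  shows "hol_germ x (\<lambda>z. \<Sum>i\<in>UNIV. f i z)"
proof -
  have "\<forall>\<^sub>F z in nhds x. \<forall>i. \<exists>c. has_gradient (f i) c z"
    using assms unfolding hol_germ_iff_eventually_has_gradient by (intro eventually_all_finite) auto
  then show ?thesis unfolding hol_germ_iff_eventually_has_gradient
  proof (rule eventually_mono)
    fix z assume "\<forall>i. \<exists>c. has_gradient (f i) c z"
    then obtain c where "\<And>i. has_gradient (f i) (c i) z" by metis
    then show "\<exists>c. has_gradient (\<lambda>z. \<Sum>i\<in>UNIV. f i z) c z"
      using has_gradient_sum[of UNIV f c z] by auto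
  qed
qed

lemma hol_germ_divide:
  assumes "hol_germ x f" "hol_germ x g" "g x \<noteq> 0"
  shows "hol_germ x (\<lambda>z. f z / g z)"
proof -
  have "\<forall>\<^sub>F z in nhds x. (\<exists>c. has_gradient f c z) \<and> (\<exists>c. has_gradient g c z) \<and> g z \<noteq> 0"
    using assms hol_germ_eventually_nonzero[OF assms(2,3)]
    unfolding hol_germ_iff_eventually_has_gradient by (auto intro: eventually_conj)
  then show ?thesis unfolding hol_germ_iff_eventually_has_gradient
    by (rule eventually_mono) (auto intro: has_gradient_divide)
qed

lemma hol_germ_cpd: "hol_germ x f \<Longrightarrow> hol_germ x (cpd f j)"
  unfolding hol_germ_def using hol_on_cpd by blast

lemma germ_dvd_if_eventually_mult:
  assumes "hol_germ x G" "hol_germ x D" "D x \<noteq> 0"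
    and "\<forall>\<^sub>F z in nhds x. f z * D z = G z * h z"
  shows "germ_dvd x h f"
  unfolding germ_dvd_def
proof (intro exI conjI)
  show "hol_germ x (\<lambda>z. G z / D z)" by (rule hol_germ_divide[OF assms(1-3)])
  show "\<forall>\<^sub>F z in nhds x. f z = G z / D z * h z"
    using assms(4) hol_germ_eventually_nonzero[OF assms(2,3)]
    by (rule eventually_elim2) (simp add: field_simps)
qed

section \<open>Invariant hypersurfaces and tangent vector fields\<close>

lemma invariant_hyp_gradient_annihilates_tangent_values:
  assumes cop: "coprime_germs x \<omega>" and hh: "hol_germ x h" and hx: "h x = 0"
    and inv: "invariant_hyp x \<omega> h" and grad: "has_gradient h c x"
    and v: "v \<in> tangent_values x \<omega>"
  shows "(\<Sum>q\<in>UNIV. c $ q * v $ q) = 0"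
proof (rule ccontr)
  assume ne: "(\<Sum>q\<in>UNIV. c $ q * v $ q) \<noteq> 0"
  obtain V where vV: "v = V x" and hV: "\<And>j. hol_germ x (\<lambda>z. V z $ j)"
    and tangent: "\<forall>\<^sub>F z in nhds x. (\<Sum>j\<in>UNIV. \<omega> j z * V z $ j) = 0"
    using v unfolding tangent_values_def by blast
  have "\<forall>p q. \<exists>C. hol_germ x C \<and>
      (\<forall>\<^sub>F z in nhds x. \<omega> p z * cpd h q z - \<omega> q z * cpd h p z = C z * h z)"
    using inv unfolding invariant_hyp_def germ_dvd_def by blast
  then obtain C where C: "\<forall>p q. hol_germ x (C p q) \<and>
      (\<forall>\<^sub>F z in nhds x. \<omega> p z * cpd h q z - \<omega> q z * cpd h p z = C p q z * h z)"
    unfolding choice_iff by blast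
  then have hC: "\<And>p q. hol_germ x (C p q)"
    and wedge: "\<And>p q. \<forall>\<^sub>F z in nhds x. \<omega> p z * cpd h q z - \<omega> q z * cpd h p z = C p q z * h z"
    by blast+
  define D where "D = (\<lambda>z. \<Sum>q\<in>UNIV. V z $ q * cpd h q z)"
  define G where "G p = (\<lambda>z. \<Sum>q\<in>UNIV. V z $ q * C p q z)" for p
  have hD: "hol_germ x D" unfolding D_def by (intro hol_germ_sum hol_germ_mult hV hol_germ_cpd hh)
  have hG: "hol_germ x (G p)" for p unfolding G_def by (intro hol_germ_sum hol_germ_mult hV hC)
  have "D x = (\<Sum>q\<in>UNIV. c $ q * v $ q)"
    by (simp add: D_def vV cpd_eq_gradient[OF grad] mult.commute)
  then have Dx: "D x \<noteq> 0" using ne by simp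
  have contracted: "\<forall>\<^sub>F z in nhds x. \<omega> p z * D z = G p z * h z" for p
  proof -
    have "\<forall>\<^sub>F z in nhds x. \<forall>q. \<omega> p z * cpd h q z - \<omega> q z * cpd h p z = C p q z * h z"
      by (intro eventually_all_finite wedge)
    then show ?thesis using tangent
    proof eventually_elim
      case (elim z)
      have "G p z * h z = (\<Sum>q\<in>UNIV. V z $ q * (C p q z * h z))"
        by (simp add: G_def sum_distrib_right mult.assoc)
      also have "\<dots> = (\<Sum>q\<in>UNIV. V z $ q * (\<omega> p z * cpd h q z - \<omega> q z * cpd h p z))"
        using elim(1) by simp
      also have "\<dots> = \<omega> p z * D z - cpd h p z * (\<Sum>q\<in>UNIV. \<omega> q z * V z $ q)"
        by (simp add: D_def sum_distrib_left right_diff_distrib sum_subtractf mult_ac)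
      also have "\<dots> = \<omega> p z * D z" using elim(2) by simp
      finally show ?case by simp
    qed
  qed
  have "germ_dvd x h (\<omega> p)" for p
    by (rule germ_dvd_if_eventually_mult[OF hG hD Dx contracted])
  then have "h x \<noteq> 0" using cop hh unfolding coprime_germs_def by blast
  then show False using hx by simp
qed

section \<open>Charts and the dimensional type\<close>

lemma has_derivative_vec_componentwise:
  fixes f :: "'a::real_normed_vector \<Rightarrow> complex^'n"
  assumes L: "bounded_linear L"
    and d: "\<And>k. ((\<lambda>z. f z $ k) has_derivative (\<lambda>h. L h $ k)) (at x)"
  shows "(f has_derivative L) (at x)"
  unfolding has_derivative_within
proof (intro conjI L vec_tendstoI)
  fix i
  have "((\<lambda>y. (1 / norm (y - x)) *\<^sub>R (f y $ i - (f x $ i + L (y - x) $ i))) \<longlongrightarrow> 0) (at x)"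
    using d[of i] unfolding has_derivative_within by blast
  then show "((\<lambda>y. ((1 / norm (y - x)) *\<^sub>R (f y - (f x + L (y - x)))) $ i) \<longlongrightarrow> 0 $ i) (at x)"
    by simp
qed

lemma local_coords_jacobian_left_invertible:
  assumes "local_coords x U \<phi>"
  obtains A B :: "complex^'n^'n"
  where "\<And>k. has_gradient (\<lambda>z. \<phi> z $ k) (A $ k) x" and "\<And>v. B *v (A *v v) = v"
proof -
  have xU: "x \<in> U" and U: "open U" and phi0: "\<phi> x = 0"
    and hphi: "\<And>k. hol_on U (\<lambda>z. \<phi> z $ k)"
    and "\<exists>\<psi>. (\<forall>k. hol_on (\<phi> ` U) (\<lambda>w. \<psi> w $ k)) \<and> (\<forall>z\<in>U. \<psi> (\<phi> z) = z)"
    using assms unfolding local_coords_def by auto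
  then obtain \<psi> where hpsi: "\<And>k. hol_on (\<phi> ` U) (\<lambda>w. \<psi> w $ k)"
    and inv: "\<And>z. z \<in> U \<Longrightarrow> \<psi> (\<phi> z) = z"
    by blast
  have "\<forall>k. \<exists>c. has_gradient (\<lambda>z. \<phi> z $ k) c x" using hphi xU hol_on_iff_has_gradient by blast
  then obtain a where ha: "\<And>k. has_gradient (\<lambda>z. \<phi> z $ k) (a k) x" by metis
  define A :: "complex^'n^'n" where "A = (\<chi> k. a k)"
  have hA: "\<And>k. has_gradient (\<lambda>z. \<phi> z $ k) (A $ k) x" using ha by (simp add: A_def)
  have "0 \<in> \<phi> ` U" using xU phi0 by force
  then have "\<forall>m. \<exists>c. has_gradient (\<lambda>w. \<psi> w $ m) c 0"
    using hpsi hol_on_iff_has_gradient by blast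
  then obtain b where hb: "\<And>m. has_gradient (\<lambda>w. \<psi> w $ m) (b m) 0" by metis
  define B :: "complex^'n^'n" where "B = (\<chi> m. b m)"
  have hB: "\<And>m. has_gradient (\<lambda>w. \<psi> w $ m) (B $ m) 0" using hb by (simp add: B_def)
  have dphi: "(\<phi> has_derivative (\<lambda>h. A *v h)) (at x)"
  proof (rule has_derivative_vec_componentwise)
    show "bounded_linear ((*v) A)" by (rule matrix_vector_mul_bounded_linear)
    show "((\<lambda>z. \<phi> z $ k) has_derivative (\<lambda>h. (A *v h) $ k)) (at x)" for k
      using hA[of k] unfolding has_gradient_def by (simp add: matrix_vector_mult_def)
  qed
  have chain: "(\<lambda>h. (B *v (A *v h)) $ m) = (\<lambda>h. h $ m)" for m
  proof (rule has_derivative_unique)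
    have "((\<lambda>w. \<psi> w $ m) has_derivative (\<lambda>h. (B *v h) $ m)) (at (\<phi> x))"
      using hB[of m] phi0 unfolding has_gradient_def by (simp add: matrix_vector_mult_def)
    from has_derivative_compose[OF dphi this]
    show "((\<lambda>z. \<psi> (\<phi> z) $ m) has_derivative (\<lambda>h. (B *v (A *v h)) $ m)) (at x)" .
    have "((\<lambda>z. z $ m) has_derivative (\<lambda>h. h $ m)) (at x)"
      by (rule bounded_linear_imp_has_derivative) (rule bounded_linear_vec_nth)
    then show "((\<lambda>z. \<psi> (\<phi> z) $ m) has_derivative (\<lambda>h. h $ m)) (at x)"
      by (rule has_derivative_transform_within_open[OF _ U xU]) (simp add: inv)
  qed
  show ?thesis
  proof (rule that[OF hA])
    show "B *v (A *v v) = v" for v using chain by (simp add: vec_eq_iff fun_eq_iff)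
  qed
qed

lemma vec_dim_add_card_le_if_coords_vanish:
  fixes A B :: "'a::field^'n^'n" and S :: "('a^'n) set"
  assumes left_inv: "\<And>v. B *v (A *v v) = v" and vanish: "\<And>v i. v \<in> S \<Longrightarrow> i \<in> I \<Longrightarrow> (A *v v) $ i = 0"
  shows "vec.dim S + card I \<le> CARD('n)"
proof -
  define W where "W = {w::'a^'n. \<forall>i. i \<notin> UNIV - I \<longrightarrow> w $ i = 0}"
  have "S \<subseteq> (\<lambda>w. B *v w) ` W"
  proof
    fix v assume "v \<in> S"
    then have "A *v v \<in> W" using vanish by (auto simp: W_def)
    moreover have "v = B *v (A *v v)" by (rule left_inv[symmetric])
    ultimately show "v \<in> (\<lambda>w. B *v w) ` W" by blast
  qed
  from vec.dim_subset[OF this]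
  have "vec.dim S \<le> vec.dim W"
    using vec.dim_image_le[OF matrix_vector_mul_linear_gen, of B W] by simp
  also have "\<dots> = CARD('n) - card I"
    unfolding W_def dim_substandard_cart by (simp add: card_Diff_subset)
  finally show ?thesis using card_mono[of UNIV I] by simp
qed

theorem mainTheorem17:
  fixes x :: "complex^'n"
    and \<omega> :: "'n \<Rightarrow> complex^'n \<Rightarrow> complex"
    and E U :: "(complex^'n) set"
    and \<phi> :: "complex^'n \<Rightarrow> complex^'n"
    and I :: "'n set"
  assumes "foliation_form x \<omega>"
    and "local_coords x U \<phi>"
    and "E \<inter> U = {z \<in> U. \<exists>i\<in>I. \<phi> z $ i = 0}"
    and "\<forall>i\<in>I. invariant_hyp x \<omega> (\<lambda>z. \<phi> z $ i)"
  shows "card I \<le> dim_type x \<omega>"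
proof -
  \<comment> \<open>The description of \<open>E\<close> is not used: the bound only involves the equations \<open>\<phi>\<^sub>i\<close>.\<close>
  have cop: "coprime_germs x \<omega>" using assms(1) unfolding foliation_form_def by auto
  have coords_hol: "hol_germ x (\<lambda>z. \<phi> z $ i)" and coords_0: "\<phi> x $ i = 0" for i
    using assms(2) unfolding local_coords_def hol_germ_def by auto
  obtain A B :: "complex^'n^'n" where hA: "\<And>k. has_gradient (\<lambda>z. \<phi> z $ k) (A $ k) x"
    and left_inv: "\<And>v. B *v (A *v v) = v"
    using local_coords_jacobian_left_invertible[OF assms(2)] by blast
  have "(A *v v) $ i = 0" if "v \<in> tangent_values x \<omega>" "i \<in> I" for v i
    using invariant_hyp_gradient_annihilates_tangent_values[OF cop coords_hol coords_0 _ hA that(1)]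
      assms(4) that(2)
    by (simp add: matrix_vector_mult_def)
  then have "vec.dim (tangent_values x \<omega>) + card I \<le> CARD('n)"
    by (rule vec_dim_add_card_le_if_coords_vanish[OF left_inv])
  then show ?thesis unfolding dim_type_def by linarith
qed

end
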